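(* Assume (A). Let $t>t_0$, $s\in(0,t)$ with $k(s,t)\ge c_1s$. Define $(\theta_1^*(s,t),\theta_2^*(s,t))^\top:=\Sigma(s,t)^{-1}(b+c_2t,\ c_1s)^\top$ and $$f(r):=-\mathbb E\big(A(r,0)\mid A(-t,0)=b+c_2t,\ A(-s,0)=c_1s\big)=-\theta_1^*(s,t)\Gamma(-r,t)-\theta_2^*(s,t)\Gamma(-r,s),\quad r\in\mathbb R.$$ Then $f\in\mathcal U^{s,t}\cap R$ and $I(f)=\inf_{g\in\mathcal U^{s,t}}I(g)=\Lambda_{s,t}(b+c_2t,\ b+c_2t-c_1s)$.
   Context: $v:[0,\infty)\to[0,\infty)$ is continuous, $v(0)=0$, $\lim_{t\to\infty}v(t)/t^\alpha=0$ for some $\alpha<2$; $A$ is a centered Gaussian process on $\mathbb R$ with continuous paths, $A(0)=0$, stationary increments and $\mathrm{Var}(A(t)-A(s))=v(|t-s|)$; $A(s,t):=A(t)-A(s)$; $\Gamma(s,t):=\tfrac12(v(|s|)+v(|t|)-v(|t-s|))$. $\Omega$: continuous $\omega:\mathbb R\to\mathbb R$ with $\omega(0)=0$, $\omega(t)/(1+|t|)\to0$ as $t\to\pm\infty$. $R$: reproducing kernel Hilbert space of $\Gamma$ (closure of span $\{\Gamma(u,\cdot)\}$ with $\langle\Gamma(u,\cdot),\Gamma(w,\cdot)\rangle_R=\Gamma(u,w)$); $I(\omega)=\frac12\|\omega\|_R^2$ on $R$, $\infty$ elsewhere. Fix $b>0$, $c_1>c_2>0$, $t_0:=b/(c_1-c_2)$;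 $\mathcal U^{s,t}:=\{f\in\Omega:-f(-t)\ge b+c_2t,\ f(-s)-f(-t)\ge b+c_2t-c_1s\}$. For $0<s<t$, $\Sigma(s,t):=\begin{pmatrix}v(t)&\Gamma(s,t)\\ \Gamma(s,t)&v(s)\end{pmatrix}$ (assumed nonsingular), $\Lambda_{s,t}(y,z):=\frac12(y,z)\Sigma(t-s,t)^{-1}(y,z)^\top$, $k(s,t):=\frac{\Gamma(s,t)}{v(t)}(b+c_2t)$. Assumption (A): $\sqrt v\in C^2([0,\infty))$, strictly increasing and strictly concave. *)

theory Defs
  imports "HOL-Probability.Probability"
begin

definition Gam :: "(real \<Rightarrow> real) \<Rightarrow> real \<Rightarrow> real \<Rightarrow> real" where
  "Gam v s t = (v \<bar>s\<bar> + v \<bar>t\<bar> - v \<bar>t - s\<bar>) / 2"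

definition Omega :: "(real \<Rightarrow> real) set" where
  "Omega = {\<omega>. continuous_on UNIV \<omega> \<and> \<omega> 0 = 0 \<and>
      ((\<lambda>t. \<omega> t / (1 + \<bar>t\<bar>)) \<longlongrightarrow> 0) at_top \<and>
      ((\<lambda>t. \<omega> t / (1 + \<bar>t\<bar>)) \<longlongrightarrow> 0) at_bot}"

(* RKHS of a kernel K, built as the completion of span{K(u,.)}:
   elements of the span are given by finitely supported coefficient functions c *)
definition supp_c :: "(real \<Rightarrow> real) \<Rightarrow> real set" where
  "supp_c c = {u. c u \<noteq> 0}"

definition span_fun :: "(real \<Rightarrow> real \<Rightarrow> real) \<Rightarrow> (real \<Rightarrow> real) \<Rightarrow> real \<Rightarrow> real" where
  "span_fun K c = (\<lambda>x. \<Sum>u\<in>supp_c c. c u * K u x)"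

(* squared pre-Hilbert norm of span_fun K c, i.e. <h,h> with <K(u,.),K(w,.)> = K(u,w) *)
definition span_sqnorm :: "(real \<Rightarrow> real \<Rightarrow> real) \<Rightarrow> (real \<Rightarrow> real) \<Rightarrow> real" where
  "span_sqnorm K c = (\<Sum>u\<in>supp_c c. \<Sum>w\<in>supp_c c. c u * c w * K u w)"

definition approximating :: "(real \<Rightarrow> real \<Rightarrow> real) \<Rightarrow> (nat \<Rightarrow> real \<Rightarrow> real) \<Rightarrow> (real \<Rightarrow> real) \<Rightarrow> bool" where
  "approximating K cs \<omega> \<longleftrightarrow>
     (\<forall>n. finite (supp_c (cs n))) \<and>
     (\<forall>e>0. \<exists>N. \<forall>n\<ge>N. \<forall>m\<ge>N. span_sqnorm K (\<lambda>u. cs n u - cs m u) < e) \<and>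
     (\<forall>x. (\<lambda>n. span_fun K (cs n) x) \<longlonglongrightarrow> \<omega> x)"

definition rkhs :: "(real \<Rightarrow> real \<Rightarrow> real) \<Rightarrow> (real \<Rightarrow> real) set" where
  "rkhs K = {\<omega>. \<exists>cs. approximating K cs \<omega>}"

definition rkhs_sqnorm :: "(real \<Rightarrow> real \<Rightarrow> real) \<Rightarrow> (real \<Rightarrow> real) \<Rightarrow> real" where
  "rkhs_sqnorm K \<omega> = (THE a. \<forall>cs. approximating K cs \<omega> \<longrightarrow> (\<lambda>n. span_sqnorm K (cs n)) \<longlonglongrightarrow> a)"

definition rate :: "(real \<Rightarrow> real) \<Rightarrow> (real \<Rightarrow> real) \<Rightarrow> ereal" where
  "rate v \<omega> = (if \<omega> \<in> rkhs (Gam v) then ereal (rkhs_sqnorm (Gam v) \<omega> / 2) else \<infinity>)"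

definition U_set :: "real \<Rightarrow> real \<Rightarrow> real \<Rightarrow> real \<Rightarrow> real \<Rightarrow> (real \<Rightarrow> real) set" where
  "U_set b c1 c2 s t = {f \<in> Omega. - f (-t) \<ge> b + c2 * t \<and> f (-s) - f (-t) \<ge> b + c2 * t - c1 * s}"

definition Sigma_mat :: "(real \<Rightarrow> real) \<Rightarrow> real \<Rightarrow> real \<Rightarrow> real^2^2" where
  "Sigma_mat v s t = vector [vector [v t, Gam v s t], vector [Gam v s t, v s]]"

definition Lambda :: "(real \<Rightarrow> real) \<Rightarrow> real \<Rightarrow> real \<Rightarrow> real \<Rightarrow> real \<Rightarrow> real" where
  "Lambda v s t y z = (let w = (vector [y, z] :: real^2) in
      (1/2) * (w \<bullet> (matrix_inv (Sigma_mat v (t - s) t) *v w)))"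

definition kfun :: "(real \<Rightarrow> real) \<Rightarrow> real \<Rightarrow> real \<Rightarrow> real \<Rightarrow> real \<Rightarrow> real" where
  "kfun v b c2 s t = Gam v s t / v t * (b + c2 * t)"

definition theta_star :: "(real \<Rightarrow> real) \<Rightarrow> real \<Rightarrow> real \<Rightarrow> real \<Rightarrow> real \<Rightarrow> real \<Rightarrow> real^2" where
  "theta_star v b c1 c2 s t = matrix_inv (Sigma_mat v s t) *v vector [b + c2 * t, c1 * s]"

definition fstar :: "(real \<Rightarrow> real) \<Rightarrow> real \<Rightarrow> real \<Rightarrow> real \<Rightarrow> real \<Rightarrow> real \<Rightarrow> real \<Rightarrow> real" where
  "fstar v b c1 c2 s t r = - (theta_star v b c1 c2 s t $ 1) * Gam v (-r) t
                            - (theta_star v b c1 c2 s t $ 2) * Gam v (-r) s"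

definition strictly_concave_on :: "real set \<Rightarrow> (real \<Rightarrow> real) \<Rightarrow> bool" where
  "strictly_concave_on S g \<longleftrightarrow> (\<forall>x\<in>S. \<forall>y\<in>S. x \<noteq> y \<longrightarrow> (\<forall>l::real. 0 < l \<and> l < 1 \<longrightarrow>
       g (l * x + (1 - l) * y) > l * g x + (1 - l) * g y))"

definition C2_nonneg :: "(real \<Rightarrow> real) \<Rightarrow> bool" where
  "C2_nonneg g \<longleftrightarrow> (\<exists>g1 g2. (\<forall>x\<ge>0. (g has_real_derivative g1 x) (at x within {0..})) \<and>
       (\<forall>x\<ge>0. (g1 has_real_derivative g2 x) (at x within {0..})) \<and> continuous_on {0..} g2)"

definition assumption_A :: "(real \<Rightarrow> real) \<Rightarrow> bool" where
  "assumption_A v \<longleftrightarrow> C2_nonneg (\<lambda>x. sqrt (v x)) \<and> strict_mono_on {0..} (\<lambda>x. sqrt (v x))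
      \<and> strictly_concave_on {0..} (\<lambda>x. sqrt (v x))"

definition centered_gaussian :: "'a measure \<Rightarrow> ('a \<Rightarrow> real) \<Rightarrow> bool" where
  "centered_gaussian M X \<longleftrightarrow> X \<in> borel_measurable M \<and>
     ((AE x in M. X x = 0) \<or> (\<exists>\<sigma>>0. distributed M lborel X (normal_density 0 \<sigma>)))"

definition centered_gaussian_process :: "'a measure \<Rightarrow> (real \<Rightarrow> 'a \<Rightarrow> real) \<Rightarrow> bool" where
  "centered_gaussian_process M A \<longleftrightarrow>
     (\<forall>F c. finite F \<longrightarrow> centered_gaussian M (\<lambda>x. \<Sum>u\<in>F. c u * A u x))"

end

theory Submission
  imports Defs
begin

text \<open>
  The conditional mean \<open>f\<close> is the kernel section \<open>h = - \<theta>\<^sub>1 \<Gamma>(-t,\<cdot>) - \<theta>\<^sub>2 \<Gamma>(-s,\<cdot>)\<close>, so it lies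
  in the span of the kernel, with \<open>\<parallel>h\<parallel>\<^sup>2 = \<theta>\<^sup>T \<Sigma> \<theta> = \<theta>\<^sub>1 (b + c\<^sub>2 t) + \<theta>\<^sub>2 c\<^sub>1 s\<close>; the linear system
  \<open>\<Sigma> \<theta> = (b + c\<^sub>2 t, c\<^sub>1 s)\<close> says exactly that \<open>f\<close> meets both constraints of \<open>U\<^bsup>s,t\<^esup>\<close> with
  equality. For \<open>g \<in> U\<^bsup>s,t\<^esup> \<inter> R\<close>, positivity of \<open>\<parallel>g - h\<parallel>\<^sup>2\<close> and the reproducing property give
  \<open>\<parallel>g\<parallel>\<^sup>2 \<ge> 2 \<langle>h, g\<rangle> - \<parallel>h\<parallel>\<^sup>2\<close> with \<open>\<langle>h, g\<rangle> = - \<theta>\<^sub>1 g(-t) - \<theta>\<^sub>2 g(-s)\<close>, and the constraints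
  give \<open>\<langle>h, g\<rangle> \<ge> \<parallel>h\<parallel>\<^sup>2\<close> as soon as \<open>\<theta>\<^sub>2 \<le> 0 \<le> \<theta>\<^sub>1 + \<theta>\<^sub>2\<close>. The first sign condition is the
  hypothesis \<open>k(s,t) \<ge> c\<^sub>1 s\<close>; the second follows from \<open>t > t\<^sub>0\<close> and the inequality
  \<open>(t - s)(v(t) - v(s)) \<le> (t + s) v(t - s)\<close>, a consequence of the concavity of \<open>\<surd>v\<close>.

  Only the covariance of \<open>A\<close> matters, through the positive semidefiniteness of \<open>\<Gamma>\<close>, which
  also bounds \<open>|\<Gamma>(-r,a)|\<close> by \<open>\<surd>(v(|r|) v(|a|))\<close> and so puts \<open>f\<close> into \<open>\<Omega>\<close>.
\<close>

lemma matrix_inv_inverse: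
  fixes S :: "'a::semiring_1^'n^'m"
  assumes "invertible S"
  shows "S ** matrix_inv S = mat 1" and "matrix_inv S ** S = mat 1"
  using someI_ex[OF assms[unfolded invertible_def]] by (simp_all add: matrix_inv_def)

lemma mult_matrix_inv_vector:
  fixes S :: "'a::semiring_1^'n^'m"
  assumes "invertible S"
  shows "S *v (matrix_inv S *v w) = w"
  by (simp add: matrix_vector_mul_assoc matrix_inv_inverse[OF assms])

lemma matrix_inv_quadratic_form:
  fixes S :: "real^'n^'n"
  assumes "invertible S" and "S *v \<theta> = w"
  shows "w \<bullet> (matrix_inv S *v w) = w \<bullet> \<theta>"
  by (metis assms matrix_inv_inverse(2) matrix_vector_mul_assoc matrix_vector_mul_lid)

lemma cramer_2x2_sym:
  fixes p q g x1 x2 y1 y2 :: real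
  assumes "p * x1 + g * x2 = y1" and "g * x1 + q * x2 = y2"
  shows "(p * q - g\<^sup>2) * x1 = q * y1 - g * y2" and "(p * q - g\<^sup>2) * x2 = p * y2 - g * y1"
  unfolding assms[symmetric] by (simp_all add: power2_eq_square algebra_simps)

subsection \<open>The pre-Hilbert space spanned by a kernel\<close>

abbreviation fin_supp :: "(real \<Rightarrow> real) \<Rightarrow> bool" where
  "fin_supp c \<equiv> finite (supp_c c)"

definition pairing :: "(real \<Rightarrow> real) \<Rightarrow> (real \<Rightarrow> real) \<Rightarrow> real" where
  "pairing c g = (\<Sum>u\<in>supp_c c. c u * g u)"

definition span_inner :: "(real \<Rightarrow> real \<Rightarrow> real) \<Rightarrow> (real \<Rightarrow> real) \<Rightarrow> (real \<Rightarrow> real) \<Rightarrow> real" where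
  "span_inner K c d = (\<Sum>u\<in>supp_c c. \<Sum>w\<in>supp_c d. c u * d w * K u w)"

definition span_norm :: "(real \<Rightarrow> real \<Rightarrow> real) \<Rightarrow> (real \<Rightarrow> real) \<Rightarrow> real" where
  "span_norm K c = sqrt (span_sqnorm K c)"

lemma supp_c_indicator [simp]: "supp_c (indicator {p}) = {p}"
  by (auto simp: supp_c_def indicator_def)

lemma supp_c_lin: "supp_c (\<lambda>u. a * c u + b * d u) \<subseteq> supp_c c \<union> supp_c d"
  by (auto simp: supp_c_def)

lemma fin_supp_lin: "fin_supp c \<Longrightarrow> fin_supp d \<Longrightarrow> fin_supp (\<lambda>u. a * c u + b * d u)"
  using finite_subset[OF supp_c_lin] by blast

lemma fin_supp_diff: "fin_supp c \<Longrightarrow> fin_supp d \<Longrightarrow> fin_supp (\<lambda>u. c u - d u)"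
  using fin_supp_lin[of c d 1 "-1"] by simp

lemma pairing_eq_sum:
  assumes "finite S" and "supp_c c \<subseteq> S"
  shows "pairing c g = (\<Sum>u\<in>S. c u * g u)"
  unfolding pairing_def by (rule sum.mono_neutral_left) (use assms in \<open>auto simp: supp_c_def\<close>)

lemma pairing_lin:
  assumes "fin_supp c" and "fin_supp d"
  shows "pairing (\<lambda>u. a * c u + b * d u) g = a * pairing c g + b * pairing d g"
  using assms supp_c_lin[of a c b d]
  by (simp add: pairing_eq_sum[of "supp_c c \<union> supp_c d"] sum.distrib sum_distrib_left algebra_simps)

lemma pairing_lin_right: "pairing c (\<lambda>x. a * g x + b * h x) = a * pairing c g + b * pairing c h"
  by (simp add: pairing_def sum.distrib sum_distrib_left algebra_simps)

lemma pairing_indicator [simp]: "pairing (indicator {p}) g = g p"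
  by (simp add: pairing_def)

lemma span_fun_eq_pairing: "span_fun K c x = pairing c (\<lambda>u. K u x)"
  by (simp add: span_fun_def pairing_def)

lemma span_fun_lin:
  assumes "fin_supp c" and "fin_supp d"
  shows "span_fun K (\<lambda>u. a * c u + b * d u) x = a * span_fun K c x + b * span_fun K d x"
  using assms by (simp add: span_fun_eq_pairing pairing_lin)

lemma span_fun_indicator [simp]: "span_fun K (indicator {p}) x = K p x"
  by (simp add: span_fun_eq_pairing)

lemma span_sqnorm_eq_inner: "span_sqnorm K c = span_inner K c c"
  by (simp add: span_sqnorm_def span_inner_def)

lemma span_inner_eq_pairing: "span_inner K c d = pairing d (span_fun K c)"
  unfolding span_inner_def pairing_def span_fun_def
  by (subst sum.swap) (simp add: sum_distrib_left mult_ac)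

lemma span_inner_indicator [simp]: "span_inner K (indicator {p}) (indicator {q}) = K p q"
  by (simp add: span_inner_eq_pairing)

lemma tendsto_pairing:
  assumes "\<And>u. (\<lambda>n. g n u) \<longlonglongrightarrow> h u"
  shows "(\<lambda>n. pairing c (g n)) \<longlonglongrightarrow> pairing c h"
  unfolding pairing_def by (intro tendsto_intros assms)

lemma span_norm_less_iff: "0 < e \<Longrightarrow> span_norm K c < e \<longleftrightarrow> span_sqnorm K c < e\<^sup>2"
  by (metis abs_of_pos real_sqrt_abs real_sqrt_less_iff span_norm_def)

lemma approximating_iff_norm:
  "approximating K cs \<omega> \<longleftrightarrow> (\<forall>n. fin_supp (cs n)) \<and>
     (\<forall>e>0. \<exists>N. \<forall>n\<ge>N. \<forall>m\<ge>N. span_norm K (\<lambda>u. cs n u - cs m u) < e) \<and>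
     (\<forall>x. (\<lambda>n. span_fun K (cs n) x) \<longlonglongrightarrow> \<omega> x)"
proof -
  have iff: "(\<forall>e>0. \<exists>N. \<forall>n\<ge>N. \<forall>m\<ge>N. span_sqnorm K (F n m) < e)
    \<longleftrightarrow> (\<forall>e>0. \<exists>N. \<forall>n\<ge>N. \<forall>m\<ge>N. span_norm K (F n m) < e)" for F
  proof (intro iffI allI impI)
    fix e :: real assume "0 < e" and "\<forall>e>0. \<exists>N. \<forall>n\<ge>N. \<forall>m\<ge>N. span_sqnorm K (F n m) < e"
    then show "\<exists>N. \<forall>n\<ge>N. \<forall>m\<ge>N. span_norm K (F n m) < e"
      by (simp add: span_norm_less_iff)
  next
    fix e :: real assume "0 < e" and "\<forall>e>0. \<exists>N. \<forall>n\<ge>N. \<forall>m\<ge>N. span_norm K (F n m) < e"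
    then obtain N where "\<forall>n\<ge>N. \<forall>m\<ge>N. span_norm K (F n m) < sqrt e"
      by (meson real_sqrt_gt_zero)
    then show "\<exists>N. \<forall>n\<ge>N. \<forall>m\<ge>N. span_sqnorm K (F n m) < e"
      using \<open>0 < e\<close> by (auto simp: span_norm_less_iff)
  qed
  show ?thesis
    by (simp only: approximating_def iff[of "\<lambda>n m u. cs n u - cs m u"])
qed

locale pos_semidef_kernel =
  fixes K :: "real \<Rightarrow> real \<Rightarrow> real"
  assumes commute: "K u w = K w u"
    and pos_semidef: "finite S \<Longrightarrow> 0 \<le> (\<Sum>u\<in>S. \<Sum>w\<in>S. c u * c w * K u w)"
begin

lemma span_inner_commute: "span_inner K c d = span_inner K d c"
  unfolding span_inner_def by (subst sum.swap) (simp add: commute mult_ac)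

lemma span_sqnorm_nonneg: "0 \<le> span_sqnorm K c"
  unfolding span_sqnorm_def by (cases "fin_supp c") (auto intro: pos_semidef)

lemma span_inner_lin_left:
  assumes "fin_supp c" and "fin_supp d"
  shows "span_inner K (\<lambda>u. a * c u + b * d u) e = a * span_inner K c e + b * span_inner K d e"
proof -
  have "span_fun K (\<lambda>u. a * c u + b * d u) = (\<lambda>x. a * span_fun K c x + b * span_fun K d x)"
    using assms by (intro ext span_fun_lin)
  then show ?thesis by (simp add: span_inner_eq_pairing pairing_lin_right)
qed

lemma span_inner_lin_right:
  assumes "fin_supp c" and "fin_supp d"
  shows "span_inner K e (\<lambda>u. a * c u + b * d u) = a * span_inner K e c + b * span_inner K e d"
  using span_inner_lin_left[OF assms] by (simp add: span_inner_commute)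

lemma span_sqnorm_lin:
  assumes "fin_supp c" and "fin_supp d"
  shows "span_sqnorm K (\<lambda>u. a * c u + b * d u)
    = a\<^sup>2 * span_sqnorm K c + 2 * a * b * span_inner K c d + b\<^sup>2 * span_sqnorm K d"
  using assms
  by (simp add: span_sqnorm_eq_inner span_inner_lin_left span_inner_lin_right fin_supp_lin
      span_inner_commute[of d c] power2_eq_square algebra_simps)

lemma span_inner_Cauchy_Schwarz:
  assumes "fin_supp c" and "fin_supp d"
  shows "(span_inner K c d)\<^sup>2 \<le> span_sqnorm K c * span_sqnorm K d"
proof (cases "span_sqnorm K d = 0")
  case True
  have "0 \<le> span_sqnorm K c - 2 * l * span_inner K c d" for l
    using span_sqnorm_lin[OF assms, of 1 "-l"] span_sqnorm_nonneg[of "\<lambda>u. 1 * c u + -l * d u"] True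
    by simp
  from this[of "(span_sqnorm K c + 1) / (2 * span_inner K c d)"] True show ?thesis
    by (cases "span_inner K c d = 0") (simp_all add: field_simps)
next
  case False
  then have pos: "0 < span_sqnorm K d" using span_sqnorm_nonneg[of d] by simp
  define l where "l = span_inner K c d / span_sqnorm K d"
  have "0 \<le> span_sqnorm K (\<lambda>u. 1 * c u + (-l) * d u)" by (rule span_sqnorm_nonneg)
  also have "\<dots> = span_sqnorm K c - 2 * l * span_inner K c d + l\<^sup>2 * span_sqnorm K d"
    unfolding span_sqnorm_lin[OF assms] by simp
  also have "\<dots> = span_sqnorm K c - (span_inner K c d)\<^sup>2 / span_sqnorm K d"
    using pos by (simp add: l_def power2_eq_square field_simps)
  finally show ?thesis using pos by (simp add: field_simps)
qed

lemma kernel_Cauchy_Schwarz: "(K p q)\<^sup>2 \<le> K p p * K q q"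
  using span_inner_Cauchy_Schwarz[of "indicator {p}" "indicator {q}"]
  by (simp add: span_sqnorm_eq_inner)

lemma span_norm_nonneg: "0 \<le> span_norm K c"
  by (simp add: span_norm_def span_sqnorm_nonneg)

lemma span_norm_square: "(span_norm K c)\<^sup>2 = span_sqnorm K c"
  by (simp add: span_norm_def span_sqnorm_nonneg)

lemma span_inner_le_norm:
  assumes "fin_supp c" and "fin_supp d"
  shows "\<bar>span_inner K c d\<bar> \<le> span_norm K c * span_norm K d"
proof -
  have "\<bar>span_inner K c d\<bar> = sqrt ((span_inner K c d)\<^sup>2)" by simp
  also have "\<dots> \<le> sqrt (span_sqnorm K c * span_sqnorm K d)"
    using span_inner_Cauchy_Schwarz[OF assms] by (rule real_sqrt_le_mono)
  finally show ?thesis by (simp add: span_norm_def real_sqrt_mult)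
qed

lemma span_norm_lin_le:
  assumes "fin_supp c" and "fin_supp d"
  shows "span_norm K (\<lambda>u. a * c u + b * d u) \<le> \<bar>a\<bar> * span_norm K c + \<bar>b\<bar> * span_norm K d"
proof (rule power2_le_imp_le)
  let ?nc = "span_norm K c" and ?nd = "span_norm K d"
  have "a * b * span_inner K c d \<le> \<bar>a\<bar> * \<bar>b\<bar> * \<bar>span_inner K c d\<bar>"
    by (metis abs_ge_self abs_mult)
  also have "\<dots> \<le> \<bar>a\<bar> * \<bar>b\<bar> * (?nc * ?nd)"
    using span_inner_le_norm[OF assms] by (simp add: mult_left_mono)
  finally have cross: "a * b * span_inner K c d \<le> \<bar>a\<bar> * \<bar>b\<bar> * (?nc * ?nd)" .
  have "(span_norm K (\<lambda>u. a * c u + b * d u))\<^sup>2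
      = a\<^sup>2 * ?nc\<^sup>2 + 2 * (a * b * span_inner K c d) + b\<^sup>2 * ?nd\<^sup>2"
    unfolding span_norm_square span_sqnorm_lin[OF assms] by simp
  also have "\<dots> \<le> a\<^sup>2 * ?nc\<^sup>2 + 2 * (\<bar>a\<bar> * \<bar>b\<bar> * (?nc * ?nd)) + b\<^sup>2 * ?nd\<^sup>2"
    using cross by simp
  also have "\<dots> = (\<bar>a\<bar> * ?nc + \<bar>b\<bar> * ?nd)\<^sup>2"
    by (simp add: power2_sum power_mult_distrib mult_ac)
  finally show "(span_norm K (\<lambda>u. a * c u + b * d u))\<^sup>2 \<le> (\<bar>a\<bar> * ?nc + \<bar>b\<bar> * ?nd)\<^sup>2" .
qed (simp add: span_norm_nonneg)

lemma span_norm_diff_le: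
  assumes "fin_supp c" and "fin_supp d"
  shows "span_norm K (\<lambda>u. c u - d u) \<le> span_norm K c + span_norm K d"
  using span_norm_lin_le[OF assms, of 1 "-1"] by simp

lemma span_norm_abs_diff_le:
  assumes "fin_supp c" and "fin_supp d"
  shows "\<bar>span_norm K c - span_norm K d\<bar> \<le> span_norm K (\<lambda>u. c u - d u)"
proof -
  have cd: "fin_supp (\<lambda>u. c u - d u)" using assms by (rule fin_supp_diff)
  have "span_norm K c \<le> span_norm K d + span_norm K (\<lambda>u. c u - d u)"
    using span_norm_lin_le[OF assms(2) cd, of 1 1] by simp
  moreover have "span_norm K d \<le> span_norm K c + span_norm K (\<lambda>u. c u - d u)"
    using span_norm_lin_le[OF assms(1) cd, of 1 "-1"] by simp
  ultimately show ?thesis by linarith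
qed

lemma approximating_diff:
  assumes cs: "approximating K cs \<omega>" and ds: "approximating K ds \<omega>"
  shows "approximating K (\<lambda>n u. cs n u - ds n u) (\<lambda>_. 0)"
  unfolding approximating_iff_norm
proof (intro conjI allI impI)
  have fin: "fin_supp (cs n)" "fin_supp (ds n)" for n
    using cs ds by (auto simp: approximating_def)
  then show "fin_supp (\<lambda>u. cs n u - ds n u)" for n
    by (rule fin_supp_diff)
  show "(\<lambda>n. span_fun K (\<lambda>u. cs n u - ds n u) x) \<longlonglongrightarrow> 0" for x
  proof -
    have "(\<lambda>n. span_fun K (cs n) x - span_fun K (ds n) x) \<longlonglongrightarrow> \<omega> x - \<omega> x"
      using cs ds by (intro tendsto_diff) (auto simp: approximating_def)
    then show ?thesis using span_fun_lin[OF fin, where a=1 and b="-1"] by simp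
  qed
  fix e :: real assume "0 < e"
  then obtain N1 N2 where
    N1: "\<forall>n\<ge>N1. \<forall>m\<ge>N1. span_norm K (\<lambda>u. cs n u - cs m u) < e / 2" and
    N2: "\<forall>n\<ge>N2. \<forall>m\<ge>N2. span_norm K (\<lambda>u. ds n u - ds m u) < e / 2"
    using cs ds unfolding approximating_iff_norm by (meson half_gt_zero)
  have "span_norm K (\<lambda>u. cs n u - ds n u - (cs m u - ds m u)) < e"
    if "n \<ge> max N1 N2" "m \<ge> max N1 N2" for n m
  proof -
    have "(\<lambda>u. cs n u - ds n u - (cs m u - ds m u)) = (\<lambda>u. (cs n u - cs m u) - (ds n u - ds m u))"
      by (simp add: algebra_simps)
    then have "span_norm K (\<lambda>u. cs n u - ds n u - (cs m u - ds m u))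
        \<le> span_norm K (\<lambda>u. cs n u - cs m u) + span_norm K (\<lambda>u. ds n u - ds m u)"
      using span_norm_diff_le fin fin_supp_diff by simp
    also have "\<dots> < e" using N1 N2 that by fastforce
    finally show ?thesis .
  qed
  then show "\<exists>N. \<forall>n\<ge>N. \<forall>m\<ge>N. span_norm K (\<lambda>u. cs n u - ds n u - (cs m u - ds m u)) < e"
    by blast
qed

lemma approximating_norm_bounded:
  assumes "approximating K cs \<omega>"
  obtains B N where "0 < B" and "\<And>n. n \<ge> N \<Longrightarrow> span_norm K (cs n) \<le> B"
proof -
  have fin: "fin_supp (cs n)" for n
    using assms by (simp add: approximating_def)
  have "\<forall>e>0. \<exists>N. \<forall>n\<ge>N. \<forall>m\<ge>N. span_norm K (\<lambda>u. cs n u - cs m u) < e"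
    using assms by (simp add: approximating_iff_norm)
  then obtain N where N: "\<forall>n\<ge>N. \<forall>m\<ge>N. span_norm K (\<lambda>u. cs n u - cs m u) < 1"
    using zero_less_one by blast
  have "span_norm K (cs n) \<le> span_norm K (cs N) + 1" if "n \<ge> N" for n
  proof -
    have "span_norm K (\<lambda>u. cs n u - cs N u) < 1" using N that by simp
    then show ?thesis using span_norm_abs_diff_le[OF fin[of n] fin[of N]] by simp
  qed
  moreover have "0 < span_norm K (cs N) + 1"
    using span_norm_nonneg[of "cs N"] by simp
  ultimately show thesis
    using that by blast
qed

text \<open>Write \<open>\<parallel>E n\<parallel>\<^sup>2 = \<langle>E n, E n - E m\<rangle> + \<langle>E n, E m\<rangle>\<close>: the first term is small by the Cauchy
  property, the second is the pairing of \<open>E m\<close> with \<open>span_fun K (E n)\<close>, which tends to \<open>0\<close>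
  pointwise.\<close>
lemma approximating_zero_sqnorm_tendsto:
  assumes E: "approximating K E (\<lambda>_. 0)"
  shows "(\<lambda>n. span_sqnorm K (E n)) \<longlonglongrightarrow> 0"
proof (rule LIMSEQ_I)
  fix r :: real assume "0 < r"
  have fin: "fin_supp (E n)" for n
    using E by (simp add: approximating_def)
  obtain B N1 where "0 < B" and B: "\<And>n. n \<ge> N1 \<Longrightarrow> span_norm K (E n) \<le> B"
    using approximating_norm_bounded[OF E] by blast
  have "\<forall>e>0. \<exists>N. \<forall>n\<ge>N. \<forall>m\<ge>N. span_norm K (\<lambda>u. E n u - E m u) < e"
    using E by (simp add: approximating_iff_norm)
  moreover have "0 < r / (2 * B)"
    using \<open>0 < B\<close> \<open>0 < r\<close> by simp
  ultimately obtain N2 where N2: "\<forall>n\<ge>N2. \<forall>m\<ge>N2. span_norm K (\<lambda>u. E n u - E m u) < r / (2 * B)"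
    by blast
  define m where "m = max N1 N2"
  have "(\<lambda>n. span_inner K (E n) (E m)) \<longlonglongrightarrow> pairing (E m) (\<lambda>_. 0)"
    unfolding span_inner_eq_pairing
    by (rule tendsto_pairing) (use E in \<open>simp add: approximating_def\<close>)
  then obtain N3 where N3: "\<forall>n\<ge>N3. \<bar>span_inner K (E n) (E m)\<bar> < r / 2"
    using LIMSEQ_D[of _ 0 "r / 2"] \<open>0 < r\<close> by (fastforce simp: pairing_def)
  show "\<exists>N. \<forall>n\<ge>N. norm (span_sqnorm K (E n) - 0) < r"
  proof (intro exI allI impI)
    fix n assume n: "max m N3 \<le> n"
    have "span_sqnorm K (E n) = span_inner K (E n) (\<lambda>u. E n u - E m u) + span_inner K (E n) (E m)"
      using span_inner_lin_right[OF fin[of n] fin[of m], where e="E n" and a=1 and b="-1"]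
      by (simp add: span_sqnorm_eq_inner)
    also have "\<dots> \<le> span_norm K (E n) * span_norm K (\<lambda>u. E n u - E m u) + \<bar>span_inner K (E n) (E m)\<bar>"
      using span_inner_le_norm[OF fin[of n] fin_supp_diff[OF fin[of n] fin[of m]]] by linarith
    also have "\<dots> < B * (r / (2 * B)) + r / 2"
    proof (rule add_le_less_mono)
      show "span_norm K (E n) * span_norm K (\<lambda>u. E n u - E m u) \<le> B * (r / (2 * B))"
        using B N2 n \<open>0 < B\<close> by (intro mult_mono) (auto simp: m_def span_norm_nonneg less_imp_le)
      show "\<bar>span_inner K (E n) (E m)\<bar> < r / 2" using N3 n by simp
    qed
    also have "\<dots> = r" using \<open>0 < B\<close> by simp
    finally show "norm (span_sqnorm K (E n) - 0) < r"
      using span_sqnorm_nonneg[of "E n"] by simp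
  qed
qed

text \<open>As \<open>rkhs_sqnorm\<close> is a definite description, the limit must be shown not to depend on the
  approximating sequence.\<close>
lemma approximating_sqnorm_tendsto:
  assumes cs: "approximating K cs \<omega>"
  shows "(\<lambda>n. span_sqnorm K (cs n)) \<longlonglongrightarrow> rkhs_sqnorm K \<omega>"
proof -
  have fin: "fin_supp (cs n)" for n
    using cs by (simp add: approximating_def)
  have "Cauchy (\<lambda>n. span_norm K (cs n))"
  proof (rule metric_CauchyI)
    fix e :: real assume "0 < e"
    then obtain N where N: "\<forall>n\<ge>N. \<forall>m\<ge>N. span_norm K (\<lambda>u. cs n u - cs m u) < e"
      using cs by (auto simp: approximating_iff_norm)
    have "dist (span_norm K (cs m)) (span_norm K (cs n)) < e" if "m \<ge> N" "n \<ge> N" for m n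
    proof -
      have "span_norm K (\<lambda>u. cs m u - cs n u) < e" using N that by blast
      then show ?thesis using span_norm_abs_diff_le[OF fin[of m] fin[of n]] by (simp add: dist_real_def)
    qed
    then show "\<exists>N. \<forall>m\<ge>N. \<forall>n\<ge>N. dist (span_norm K (cs m)) (span_norm K (cs n)) < e"
      by blast
  qed
  then obtain L where L: "(\<lambda>n. span_norm K (cs n)) \<longlonglongrightarrow> L"
    by (auto simp: Cauchy_convergent_iff convergent_def)
  have limit: "(\<lambda>n. span_sqnorm K (ds n)) \<longlonglongrightarrow> L\<^sup>2" if ds: "approximating K ds \<omega>" for ds
  proof -
    have "(\<lambda>n. sqrt (span_sqnorm K (\<lambda>u. cs n u - ds n u))) \<longlonglongrightarrow> sqrt 0"
      by (intro tendsto_real_sqrt approximating_zero_sqnorm_tendsto approximating_diff[OF cs ds])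
    then have "(\<lambda>n. span_norm K (\<lambda>u. cs n u - ds n u)) \<longlonglongrightarrow> 0"
      by (simp add: span_norm_def)
    then have "(\<lambda>n. span_norm K (cs n) - span_norm K (ds n)) \<longlonglongrightarrow> 0"
      by (rule Lim_null_comparison[rotated])
        (use ds span_norm_abs_diff_le fin in \<open>auto simp: approximating_def\<close>)
    from tendsto_diff[OF L this] have "(\<lambda>n. span_norm K (ds n)) \<longlonglongrightarrow> L"
      by simp
    then have "(\<lambda>n. (span_norm K (ds n))\<^sup>2) \<longlonglongrightarrow> L\<^sup>2"
      by (rule tendsto_power)
    then show ?thesis
      by (simp add: span_norm_square)
  qed
  have "rkhs_sqnorm K \<omega> = L\<^sup>2"
    unfolding rkhs_sqnorm_def
    by (rule the_equality) (use limit cs LIMSEQ_unique in blast)+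
  then show ?thesis using limit[OF cs] by simp
qed

lemma span_fun_in_rkhs:
  assumes "fin_supp c"
  shows "span_fun K c \<in> rkhs K" and "rkhs_sqnorm K (span_fun K c) = span_sqnorm K c"
proof -
  have "supp_c (\<lambda>u. c u - c u) = {}"
    by (simp add: supp_c_def)
  then have approx: "approximating K (\<lambda>_. c) (span_fun K c)"
    using assms by (simp add: approximating_def span_sqnorm_def)
  then show "span_fun K c \<in> rkhs K"
    by (auto simp: rkhs_def)
  show "rkhs_sqnorm K (span_fun K c) = span_sqnorm K c"
    using approximating_sqnorm_tendsto[OF approx] by (simp add: LIMSEQ_const_iff)
qed

lemma rkhs_sqnorm_lower_bound:
  assumes "\<omega> \<in> rkhs K" and d: "fin_supp d"
  shows "2 * pairing d \<omega> - span_sqnorm K d \<le> rkhs_sqnorm K \<omega>"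
proof -
  obtain cs where cs: "approximating K cs \<omega>"
    using assms(1) by (auto simp: rkhs_def)
  then have fin: "fin_supp (cs n)" for n
    by (simp add: approximating_def)
  have lim: "(\<lambda>n. 2 * span_inner K (cs n) d - span_sqnorm K d) \<longlonglongrightarrow> 2 * pairing d \<omega> - span_sqnorm K d"
    unfolding span_inner_eq_pairing
    by (intro tendsto_intros tendsto_pairing) (use cs in \<open>simp add: approximating_def\<close>)
  have "2 * span_inner K (cs n) d - span_sqnorm K d \<le> span_sqnorm K (cs n)" for n
    using span_sqnorm_lin[OF fin[of n] d, where a=1 and b="-1"]
      span_sqnorm_nonneg[of "\<lambda>u. 1 * cs n u + -1 * d u"]
    by simp
  then show ?thesis
    using LIMSEQ_le[OF lim approximating_sqnorm_tendsto[OF cs]] by blast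
qed

end

subsection \<open>The covariance kernel\<close>

lemma Gam_commute: "Gam v u w = Gam v w u"
  by (simp add: Gam_def abs_minus_commute)

lemma Gam_uminus [simp]: "Gam v (- u) (- w) = Gam v u w"
  by (simp add: Gam_def abs_minus_commute)

lemma Gam_uminus_left: "Gam v (- u) w = Gam v (- w) u"
  by (simp add: Gam_def algebra_simps)

lemma Gam_diag: "v 0 = 0 \<Longrightarrow> Gam v u u = v \<bar>u\<bar>"
  by (simp add: Gam_def)

lemma (in prob_space) centered_gaussian_moments:
  assumes "centered_gaussian M X"
  shows "integrable M (\<lambda>x. (X x)\<^sup>2)" and "expectation X = 0"
proof -
  have X: "X \<in> borel_measurable M"
    using assms by (simp add: centered_gaussian_def)
  consider "AE x in M. X x = 0" | \<sigma> where "0 < \<sigma>" "distributed M lborel X (normal_density 0 \<sigma>)"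
    using assms by (auto simp: centered_gaussian_def)
  then have "integrable M (\<lambda>x. (X x)\<^sup>2) \<and> expectation X = 0"
  proof cases
    case 1
    then have "AE x in M. (X x)\<^sup>2 = 0"
      by auto
    with 1 X show ?thesis
      by (simp add: integrable_cong_AE[of _ _ "\<lambda>_. 0"] integral_cong_AE[of _ _ "\<lambda>_. 0"])
  next
    case 2
    then show ?thesis
      using distributed_integrable[OF 2(2), of "\<lambda>x. x\<^sup>2"] integrable_normal_moment[OF 2(1), of 0 2]
        normal_distributed_expectation[OF 2]
      by simp
  qed
  then show "integrable M (\<lambda>x. (X x)\<^sup>2)" and "expectation X = 0"
    by simp_all
qed

lemma (in prob_space) Gam_eq_second_moment:
  assumes gauss: "centered_gaussian_process M A"
    and A0: "\<forall>x\<in>space M. A 0 x = 0"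
    and var: "\<forall>r q. variance (\<lambda>x. A q x - A r x) = v \<bar>q - r\<bar>"
  shows "integrable M (\<lambda>x. A u x * A w x)" and "expectation (\<lambda>x. A u x * A w x) = Gam v u w"
proof -
  have incr: "integrable M (\<lambda>x. (A q x - A r x)\<^sup>2) \<and> expectation (\<lambda>x. (A q x - A r x)\<^sup>2) = v \<bar>q - r\<bar>"
    for q r
  proof -
    have "(\<lambda>x. \<Sum>u\<in>{q, r}. (indicator {q} u - indicator {r} u) * A u x) = (\<lambda>x. A q x - A r x)"
      by (cases "q = r") auto
    then have "centered_gaussian M (\<lambda>x. A q x - A r x)"
      using gauss unfolding centered_gaussian_process_def by (metis finite.emptyI finite_insert)
    then show ?thesis
      using centered_gaussian_moments[of "\<lambda>x. A q x - A r x"] var[rule_format, where r=r and q=q]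
      by simp
  qed
  have sq: "\<And>x. x \<in> space M \<Longrightarrow> A u x * A w x
      = ((A u x - A 0 x)\<^sup>2 + (A w x - A 0 x)\<^sup>2 - (A u x - A w x)\<^sup>2) / 2"
    using A0 by (simp add: power2_eq_square algebra_simps)
  show "integrable M (\<lambda>x. A u x * A w x)"
    using incr by (simp add: Bochner_Integration.integrable_cong[OF refl sq])
  show "expectation (\<lambda>x. A u x * A w x) = Gam v u w"
    using incr by (simp add: Bochner_Integration.integral_cong[OF refl sq] Gam_def abs_minus_commute)
qed

lemma Gam_pos_semidef_kernel:
  assumes "prob_space M"
    and gauss: "centered_gaussian_process M A"
    and A0: "\<forall>x\<in>space M. A 0 x = 0"
    and var: "\<forall>r q. prob_space.variance M (\<lambda>x. A q x - A r x) = v \<bar>q - r\<bar>"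
  shows "pos_semidef_kernel (Gam v)"
proof
  interpret prob_space M by fact
  note moment = Gam_eq_second_moment[OF gauss A0 var]
  show "Gam v u w = Gam v w u" for u w
    by (rule Gam_commute)
  fix S :: "real set" and c :: "real \<Rightarrow> real"
  assume "finite S"
  have "(\<Sum>u\<in>S. \<Sum>w\<in>S. c u * c w * Gam v u w)
      = expectation (\<lambda>x. \<Sum>u\<in>S. \<Sum>w\<in>S. c u * c w * (A u x * A w x))"
    using moment by (simp add: Bochner_Integration.integral_sum)
  also have "\<dots> = expectation (\<lambda>x. (\<Sum>u\<in>S. c u * A u x)\<^sup>2)"
    by (simp add: power2_eq_square sum_product mult_ac)
  finally show "0 \<le> (\<Sum>u\<in>S. \<Sum>w\<in>S. c u * c w * Gam v u w)"
    by simp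
qed

lemma Omega_lin:
  assumes "f \<in> Omega" and "g \<in> Omega"
  shows "(\<lambda>r. a * f r + b * g r) \<in> Omega"
proof -
  have lim: "((\<lambda>r. (a * f r + b * g r) / (1 + \<bar>r\<bar>)) \<longlongrightarrow> 0) F"
    if "((\<lambda>r. f r / (1 + \<bar>r\<bar>)) \<longlongrightarrow> 0) F" and "((\<lambda>r. g r / (1 + \<bar>r\<bar>)) \<longlongrightarrow> 0) F" for F
    using tendsto_add[OF tendsto_mult[OF tendsto_const that(1)] tendsto_mult[OF tendsto_const that(2)]]
    by (simp add: add_divide_distrib)
  show ?thesis
    using assms lim unfolding Omega_def by (auto intro!: continuous_intros)
qed

lemma tendsto_div_square_of_div_powr:
  fixes f :: "real \<Rightarrow> real"
  assumes "\<alpha> < 2" and lim: "((\<lambda>x. f x / x powr \<alpha>) \<longlongrightarrow> 0) at_top"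
  shows "((\<lambda>x. f x / x\<^sup>2) \<longlongrightarrow> 0) at_top"
proof -
  have "((\<lambda>x. x powr (\<alpha> - 2)) \<longlongrightarrow> 0) at_top"
    using assms(1) by (intro tendsto_neg_powr filterlim_ident) auto
  from tendsto_mult[OF lim this] have "((\<lambda>x. f x / x powr \<alpha> * x powr (\<alpha> - 2)) \<longlongrightarrow> 0) at_top"
    by simp
  moreover have "\<forall>\<^sub>F x in at_top. f x / x powr \<alpha> * x powr (\<alpha> - 2) = f x / x\<^sup>2"
    using eventually_gt_at_top[of 0] by eventually_elim (simp add: powr_diff powr_numeral)
  ultimately show ?thesis
    by (simp add: tendsto_cong)
qed

lemma sqrt_div_linear_tendsto:
  assumes nonneg: "\<forall>x\<ge>0. 0 \<le> v x" and growth: "((\<lambda>x. v x / x\<^sup>2) \<longlongrightarrow> 0) at_top"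
  shows "((\<lambda>r. sqrt (v \<bar>r\<bar>) / (1 + \<bar>r\<bar>)) \<longlongrightarrow> 0) at_top"
    and "((\<lambda>r. sqrt (v \<bar>r\<bar>) / (1 + \<bar>r\<bar>)) \<longlongrightarrow> 0) at_bot"
proof -
  have "((\<lambda>r. v r / (1 + r)\<^sup>2) \<longlongrightarrow> 0) at_top"
  proof (rule Lim_null_comparison[OF _ growth])
    show "\<forall>\<^sub>F r in at_top. norm (v r / (1 + r)\<^sup>2) \<le> v r / r\<^sup>2"
      using eventually_gt_at_top[of 0]
    proof eventually_elim
      case (elim r)
      have "v r / (1 + r)\<^sup>2 \<le> v r / r\<^sup>2"
        by (rule divide_left_mono) (use nonneg elim in \<open>auto intro: power_mono\<close>)
      then show ?case
        using nonneg elim by simp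
    qed
  qed
  then have "((\<lambda>r. sqrt (v r / (1 + r)\<^sup>2)) \<longlongrightarrow> sqrt 0) at_top"
    by (rule tendsto_real_sqrt)
  moreover have "\<forall>\<^sub>F r in at_top. sqrt (v r / (1 + r)\<^sup>2) = sqrt (v \<bar>r\<bar>) / (1 + \<bar>r\<bar>)"
    using eventually_gt_at_top[of 0] by eventually_elim (simp add: real_sqrt_divide)
  ultimately show top: "((\<lambda>r. sqrt (v \<bar>r\<bar>) / (1 + \<bar>r\<bar>)) \<longlongrightarrow> 0) at_top"
    by (simp add: tendsto_cong)
  then show "((\<lambda>r. sqrt (v \<bar>r\<bar>) / (1 + \<bar>r\<bar>)) \<longlongrightarrow> 0) at_bot"
    by (simp add: filterlim_at_bot_mirror)
qed

lemma Gam_section_in_Omega: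
  assumes kernel: "pos_semidef_kernel (Gam v)" and cont: "continuous_on {0..} v" and "v 0 = 0"
    and nonneg: "\<forall>x\<ge>0. 0 \<le> v x" and growth: "((\<lambda>x. v x / x\<^sup>2) \<longlongrightarrow> 0) at_top"
  shows "(\<lambda>r. Gam v (-r) a) \<in> Omega"
proof -
  have bound: "\<bar>Gam v (-r) a\<bar> \<le> sqrt (v \<bar>a\<bar>) * sqrt (v \<bar>r\<bar>)" for r
  proof -
    have "(Gam v (-r) a)\<^sup>2 \<le> v \<bar>a\<bar> * v \<bar>r\<bar>"
      using pos_semidef_kernel.kernel_Cauchy_Schwarz[OF kernel, of "-r" a] \<open>v 0 = 0\<close>
      by (simp add: Gam_diag mult.commute)
    then show ?thesis
      by (metis real_sqrt_abs real_sqrt_le_mono real_sqrt_mult)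
  qed
  have lim: "((\<lambda>r. Gam v (-r) a / (1 + \<bar>r\<bar>)) \<longlongrightarrow> 0) F"
    if "((\<lambda>r. sqrt (v \<bar>r\<bar>) / (1 + \<bar>r\<bar>)) \<longlongrightarrow> 0) F" for F
  proof (rule Lim_null_comparison)
    show "\<forall>\<^sub>F r in F. norm (Gam v (-r) a / (1 + \<bar>r\<bar>))
        \<le> sqrt (v \<bar>a\<bar>) * (sqrt (v \<bar>r\<bar>) / (1 + \<bar>r\<bar>))"
      using bound by (intro always_eventually allI) (simp add: divide_right_mono)
    show "((\<lambda>r. sqrt (v \<bar>a\<bar>) * (sqrt (v \<bar>r\<bar>) / (1 + \<bar>r\<bar>))) \<longlongrightarrow> 0) F"
      using tendsto_mult[OF tendsto_const that, of "sqrt (v \<bar>a\<bar>)"] by simp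
  qed
  have v_abs: "continuous_on UNIV (\<lambda>r. v \<bar>h r\<bar>)" if "continuous_on UNIV h" for h :: "real \<Rightarrow> real"
    by (rule continuous_on_compose2[OF cont, of UNIV "\<lambda>r. \<bar>h r\<bar>"])
      (use that in \<open>auto intro: continuous_intros\<close>)
  have "continuous_on UNIV (\<lambda>r. Gam v (-r) a)"
    unfolding Gam_def by (intro continuous_intros v_abs) simp
  then show ?thesis
    using lim sqrt_div_linear_tendsto[OF nonneg growth] \<open>v 0 = 0\<close> by (simp add: Omega_def Gam_def)
qed

subsection \<open>Consequences of the concavity of the standard deviation\<close>

lemma sqrt_v_strict_mono:
  assumes "assumption_A v" and "0 \<le> a" and "a < b"
  shows "sqrt (v a) < sqrt (v b)"
proof -
  have "strict_mono_on {0..} (\<lambda>x. sqrt (v x))"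
    using assms(1) unfolding assumption_A_def by blast
  then show ?thesis
    by (rule strict_mono_onD) (use assms in simp_all)
qed

lemma sqrt_v_mono:
  assumes "assumption_A v" and "0 \<le> a" and "a \<le> b"
  shows "sqrt (v a) \<le> sqrt (v b)"
  using sqrt_v_strict_mono[OF assms(1,2), of b] assms(3) by (cases "a = b") simp_all

lemma v_mono:
  assumes "assumption_A v" and "0 \<le> a" and "a \<le> b"
  shows "v a \<le> v b"
  using sqrt_v_mono[OF assms] by simp

lemma v_pos:
  assumes "assumption_A v" and "v 0 = 0" and "0 < x"
  shows "0 < v x"
  using sqrt_v_strict_mono[OF assms(1) order_refl assms(3)] assms(2) by simp

lemma v_nonneg:
  assumes "assumption_A v" and "v 0 = 0" and "0 \<le> x"
  shows "0 \<le> v x"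
  using v_pos[OF assms(1,2), of x] assms(2,3) by (cases "x = 0") simp_all

lemma sqrt_v_chord:
  assumes A: "assumption_A v" and "v 0 = 0" and "0 < a" and "a \<le> b"
  shows "a * sqrt (v b) \<le> b * sqrt (v a)"
proof (cases "a = b")
  case False
  have conc: "strictly_concave_on {0..} (\<lambda>x. sqrt (v x))"
    using A unfolding assumption_A_def by blast
  have "0 < b" "a < b"
    using assms False by simp_all
  then have l: "0 < a / b" "a / b < 1"
    using assms(3) by (simp_all add: field_simps)
  have "b \<in> {0..}" "(0::real) \<in> {0..}" "b \<noteq> 0"
    using \<open>0 < b\<close> by simp_all
  then have "\<forall>l. 0 < l \<and> l < 1 \<longrightarrow> l * sqrt (v b) + (1 - l) * sqrt (v 0) < sqrt (v (l * b + (1 - l) * 0))"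
    using conc unfolding strictly_concave_on_def by blast
  then have "a / b * sqrt (v b) + (1 - a / b) * sqrt (v 0) < sqrt (v (a / b * b + (1 - a / b) * 0))"
    using l by blast
  then show ?thesis
    using assms \<open>0 < b\<close> by (simp add: field_simps)
qed simp

lemma v_increment_le:
  assumes A: "assumption_A v" and v0: "v 0 = 0" and s: "0 < s" "s < t"
  shows "(t - s) * (v t - v s) \<le> (t + s) * v (t - s)"
proof -
  define d where "d = t - s"
  define G1 G2 G3 where "G1 = sqrt (v t)" and "G2 = sqrt (v s)" and "G3 = sqrt (v d)"
  have d: "0 < d" using s by (simp add: d_def)
  have V: "v t = G1\<^sup>2" "v s = G2\<^sup>2" "v d = G3\<^sup>2"
    using v_nonneg[OF A v0] s d by (simp_all add: G1_def G2_def G3_def)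
  have G: "0 \<le> G1" "0 \<le> G2" "0 \<le> G3"
    using v_nonneg[OF A v0] s d by (simp_all add: G1_def G2_def G3_def)
  have G21: "G2 \<le> G1" using sqrt_v_mono[OF A, of s t] s by (simp add: G1_def G2_def)
  have dt: "d * G1 \<le> t * G3" using sqrt_v_chord[OF A v0 d, of t] s by (simp add: G1_def G3_def d_def)
  show ?thesis
  proof (cases "d \<le> s")
    case True
    have ds: "d * G2 \<le> s * G3" using sqrt_v_chord[OF A v0 d True] by (simp add: G2_def G3_def)
    have "s * G1 \<le> t * G2" using sqrt_v_chord[OF A v0 s(1), of t] s by (simp add: G1_def G2_def)
    moreover have "t * G1 = s * G1 + d * G1" by (simp add: d_def algebra_simps)
    ultimately have "t * G1 \<le> t * (G2 + G3)" using dt by (simp add: algebra_simps)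
    then have sub: "G1 \<le> G2 + G3" using s by simp
    have "d * (G1\<^sup>2 - G2\<^sup>2) = (G1 - G2) * (d * G1 + d * G2)"
      by (simp add: power2_eq_square algebra_simps)
    also have "\<dots> \<le> (G1 - G2) * ((t + s) * G3)"
      using dt ds G21 by (intro mult_left_mono) (auto simp: algebra_simps)
    also have "\<dots> \<le> G3 * ((t + s) * G3)"
      using sub s G by (intro mult_right_mono) auto
    finally show ?thesis
      using V by (simp add: d_def power2_eq_square algebra_simps)
  next
    case False
    have "s * G3 \<le> d * G2" using sqrt_v_chord[OF A v0 s(1), of d] False by (simp add: G2_def G3_def)
    then have "(s * G3)\<^sup>2 \<le> (d * G2)\<^sup>2" using s G by (intro power_mono) auto
    moreover have "(d * G1)\<^sup>2 \<le> (t * G3)\<^sup>2" using dt d G by (intro power_mono) auto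
    ultimately have "d * (d * (G1\<^sup>2 - G2\<^sup>2)) \<le> (t * G3)\<^sup>2 - (s * G3)\<^sup>2"
      by (simp add: power2_eq_square algebra_simps)
    also have "\<dots> = d * ((t + s) * G3\<^sup>2)"
      by (simp add: d_def power2_eq_square algebra_simps)
    finally show ?thesis
      using V d by (simp add: d_def)
  qed
qed

subsection \<open>The optimal path\<close>

locale U_set_minimization = pos_semidef_kernel "Gam v"
  for v :: "real \<Rightarrow> real" +
  fixes b c1 c2 s t :: real
  assumes A: "assumption_A v" and v0: "v 0 = 0"
    and v_cont: "continuous_on {0..} v" and growth: "((\<lambda>x. v x / x\<^sup>2) \<longlongrightarrow> 0) at_top"
    and Sigma_invertible: "invertible (Sigma_mat v s t)" "invertible (Sigma_mat v (t - s) t)"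
    and b: "0 < b" and c: "c2 < c1" "0 < c2"
    and t: "b / (c1 - c2) < t"
    and s: "0 < s" "s < t"
    and k: "c1 * s \<le> kfun v b c2 s t"
begin

abbreviation "\<theta> \<equiv> theta_star v b c1 c2 s t"

abbreviation "fstar_coeffs \<equiv> \<lambda>u. - \<theta>$1 * indicator {-t} u + - \<theta>$2 * indicator {-s} u"

abbreviation "opt_sqnorm \<equiv> \<theta>$1 * (b + c2 * t) + \<theta>$2 * (c1 * s)"

lemma fin_supp_fstar_coeffs: "fin_supp fstar_coeffs"
  by (intro fin_supp_lin) simp_all

lemma theta_star_equations:
  shows "v t * \<theta>$1 + Gam v s t * \<theta>$2 = b + c2 * t" and "Gam v s t * \<theta>$1 + v s * \<theta>$2 = c1 * s"
proof -
  have "Sigma_mat v s t *v \<theta> = vector [b + c2 * t, c1 * s]"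
    unfolding theta_star_def by (rule mult_matrix_inv_vector[OF Sigma_invertible(1)])
  then have "(Sigma_mat v s t *v \<theta>) $ i = vector [b + c2 * t, c1 * s] $ i" for i
    by simp
  from this[of 1] this[of 2] show "v t * \<theta>$1 + Gam v s t * \<theta>$2 = b + c2 * t"
      and "Gam v s t * \<theta>$1 + v s * \<theta>$2 = c1 * s"
    by (simp_all add: Sigma_mat_def matrix_vector_mult_def sum_2)
qed

lemma Sigma_det_pos: "0 < v t * v s - (Gam v s t)\<^sup>2"
proof -
  have "det (Sigma_mat v s t) \<noteq> 0"
    using Sigma_invertible(1) invertible_det_nz by blast
  moreover have "(Gam v t s)\<^sup>2 \<le> Gam v t t * Gam v s s"
    by (rule kernel_Cauchy_Schwarz)
  ultimately show ?thesis
    using s v0 by (simp add: Sigma_mat_def det_2 Gam_diag Gam_commute[of v t s] power2_eq_square)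
qed

lemma theta2_nonpos: "\<theta>$2 \<le> 0"
proof -
  have "0 < v t"
    using v_pos[OF A v0] s by simp
  then have "v t * (c1 * s) \<le> Gam v s t * (b + c2 * t)"
    using k by (simp add: kfun_def field_simps)
  then have "(v t * v s - (Gam v s t)\<^sup>2) * \<theta>$2 \<le> 0"
    using cramer_2x2_sym(2)[OF theta_star_equations] by simp
  then show ?thesis
    using Sigma_det_pos by (simp add: mult_le_0_iff)
qed

lemma theta_sum_nonneg: "0 \<le> \<theta>$1 + \<theta>$2"
proof -
  let ?y = "b + c2 * t" and ?x = "c1 * s" and ?\<Gamma> = "Gam v s t"
  have \<Gamma>: "?\<Gamma> = (v s + v t - v (t - s)) / 2"
    using s by (simp add: Gam_def)
  have "0 < ?y"
    using b c s by (intro add_pos_pos mult_pos_pos) auto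
  have "b < (c1 - c2) * t"
    using t c by (simp add: field_simps)
  then have "?y * s \<le> c1 * t * s"
    using s by (intro mult_right_mono) (auto simp: algebra_simps)
  then have "?y * s \<le> ?x * t"
    by (simp add: mult_ac)
  moreover have "0 \<le> v t - ?\<Gamma>"
    using \<Gamma> v_mono[OF A, of s t] v_nonneg[OF A v0, of "t - s"] s by simp
  ultimately have mono: "(v t - ?\<Gamma>) * (?y * s) \<le> (v t - ?\<Gamma>) * (?x * t)"
    by (rule mult_left_mono)
  have "0 \<le> t * (v s - ?\<Gamma>) + s * (v t - ?\<Gamma>)"
    using v_increment_le[OF A v0 s] unfolding \<Gamma> by (simp add: field_simps)
  then have "0 \<le> ?y * (t * (v s - ?\<Gamma>) + s * (v t - ?\<Gamma>))"
    using \<open>0 < ?y\<close> by simp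
  also have "\<dots> \<le> t * ((v s - ?\<Gamma>) * ?y + (v t - ?\<Gamma>) * ?x)"
    using mono by (simp add: algebra_simps)
  also have "\<dots> = t * ((v t * v s - ?\<Gamma>\<^sup>2) * (\<theta>$1 + \<theta>$2))"
    by (simp only: distrib_left cramer_2x2_sym[OF theta_star_equations]) (simp add: algebra_simps)
  finally show ?thesis
    using s Sigma_det_pos by (simp add: zero_le_mult_iff)
qed

lemma fstar_eq_span_fun: "fstar v b c1 c2 s t = span_fun (Gam v) fstar_coeffs"
proof
  fix r
  have "span_fun (Gam v) fstar_coeffs r = - \<theta>$1 * Gam v (-t) r + - \<theta>$2 * Gam v (-s) r"
    by (subst span_fun_lin) simp_all
  then show "fstar v b c1 c2 s t r = span_fun (Gam v) fstar_coeffs r"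
    by (simp add: fstar_def Gam_uminus_left[of v t] Gam_uminus_left[of v s])
qed

lemma fstar_at:
  shows "fstar v b c1 c2 s t (-t) = - (b + c2 * t)" and "fstar v b c1 c2 s t (-s) = - (c1 * s)"
  using theta_star_equations s v0
  by (simp_all add: fstar_def Gam_diag Gam_commute[of v t s] algebra_simps)

lemma fstar_in_U: "fstar v b c1 c2 s t \<in> U_set b c1 c2 s t"
proof -
  have kernel: "pos_semidef_kernel (Gam v)"
    by (simp add: pos_semidef_kernel_def commute pos_semidef)
  have "(\<lambda>r. - \<theta>$1 * Gam v (-r) t + - \<theta>$2 * Gam v (-r) s) \<in> Omega"
    using kernel v_cont v0 v_nonneg[OF A v0] growth
    by (intro Omega_lin Gam_section_in_Omega) auto
  then have "fstar v b c1 c2 s t \<in> Omega"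
    by (simp add: fstar_def[abs_def])
  then show ?thesis
    using fstar_at by (simp add: U_set_def)
qed

lemma span_sqnorm_fstar_coeffs: "span_sqnorm (Gam v) fstar_coeffs = opt_sqnorm"
proof -
  have "span_sqnorm (Gam v) fstar_coeffs
      = (- \<theta>$1)\<^sup>2 * span_sqnorm (Gam v) (indicator {-t})
        + 2 * (- \<theta>$1) * (- \<theta>$2) * span_inner (Gam v) (indicator {-t}) (indicator {-s})
        + (- \<theta>$2)\<^sup>2 * span_sqnorm (Gam v) (indicator {-s})"
    by (rule span_sqnorm_lin) simp_all
  also have "\<dots> = \<theta>$1 * (v t * \<theta>$1 + Gam v s t * \<theta>$2) + \<theta>$2 * (Gam v s t * \<theta>$1 + v s * \<theta>$2)"
    using s v0
    by (simp add: span_sqnorm_eq_inner Gam_diag Gam_commute[of v t s] power2_eq_square algebra_simps)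
  finally have "span_sqnorm (Gam v) fstar_coeffs
      = \<theta>$1 * (v t * \<theta>$1 + Gam v s t * \<theta>$2) + \<theta>$2 * (Gam v s t * \<theta>$1 + v s * \<theta>$2)" .
  then show ?thesis
    by (simp add: theta_star_equations)
qed

lemma fstar_in_rkhs: "fstar v b c1 c2 s t \<in> rkhs (Gam v)"
  and rate_fstar: "rate v (fstar v b c1 c2 s t) = ereal (opt_sqnorm / 2)"
  using span_fun_in_rkhs[OF fin_supp_fstar_coeffs] span_sqnorm_fstar_coeffs
  by (simp_all add: fstar_eq_span_fun rate_def)

lemma opt_sqnorm_le_rkhs_sqnorm:
  assumes "g \<in> U_set b c1 c2 s t" and "g \<in> rkhs (Gam v)"
  shows "opt_sqnorm \<le> rkhs_sqnorm (Gam v) g"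
proof -
  have g: "b + c2 * t \<le> - g (-t)" "b + c2 * t - c1 * s \<le> g (-s) - g (-t)"
    using assms(1) by (auto simp: U_set_def)
  have "opt_sqnorm \<le> (\<theta>$1 + \<theta>$2) * - g (-t) + \<theta>$2 * (g (-t) - g (-s))"
    using mult_left_mono[OF g(1) theta_sum_nonneg] mult_left_mono_neg[OF g(2) theta2_nonpos]
    by (simp add: algebra_simps)
  also have "\<dots> = pairing fstar_coeffs g"
    by (subst pairing_lin) (simp_all add: algebra_simps)
  finally have pairing: "opt_sqnorm \<le> pairing fstar_coeffs g" .
  have "opt_sqnorm = 2 * opt_sqnorm - span_sqnorm (Gam v) fstar_coeffs"
    using span_sqnorm_fstar_coeffs by simp
  also have "\<dots> \<le> 2 * pairing fstar_coeffs g - span_sqnorm (Gam v) fstar_coeffs"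
    using pairing by simp
  also have "\<dots> \<le> rkhs_sqnorm (Gam v) g"
    by (rule rkhs_sqnorm_lower_bound[OF assms(2) fin_supp_fstar_coeffs])
  finally show ?thesis .
qed

lemma INF_rate_U_set: "(INF g\<in>U_set b c1 c2 s t. rate v g) = ereal (opt_sqnorm / 2)"
proof (rule antisym)
  show "(INF g\<in>U_set b c1 c2 s t. rate v g) \<le> ereal (opt_sqnorm / 2)"
    using INF_lower[OF fstar_in_U, of "rate v"] rate_fstar by simp
  show "ereal (opt_sqnorm / 2) \<le> (INF g\<in>U_set b c1 c2 s t. rate v g)"
  proof (rule INF_greatest)
    fix g assume "g \<in> U_set b c1 c2 s t"
    show "ereal (opt_sqnorm / 2) \<le> rate v g"
    proof (cases "g \<in> rkhs (Gam v)")
      case True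
      with \<open>g \<in> U_set b c1 c2 s t\<close> have "opt_sqnorm \<le> rkhs_sqnorm (Gam v) g"
        by (rule opt_sqnorm_le_rkhs_sqnorm)
      with True show ?thesis
        by (simp add: rate_def)
    qed (simp add: rate_def)
  qed
qed

text \<open>\<open>Sigma_mat v (t - s) t\<close> is the covariance of \<open>(A(-t,0), A(-t,-s))\<close>, the linear image of
  \<open>(A(-t,0), A(-s,0))\<close> under \<open>P = ((1,0),(1,-1))\<close>; the solution of the transformed system is
  \<open>P\<^sup>-\<^sup>T \<theta> = (\<theta>\<^sub>1 + \<theta>\<^sub>2, -\<theta>\<^sub>2)\<close>.\<close>
lemma Lambda_eq: "Lambda v s t (b + c2 * t) (b + c2 * t - c1 * s) = opt_sqnorm / 2"
proof -
  let ?w = "vector [b + c2 * t, b + c2 * t - c1 * s] :: real^2"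
  let ?\<theta>' = "vector [\<theta>$1 + \<theta>$2, - \<theta>$2] :: real^2"
  have \<Gamma>': "Gam v (t - s) t = v t - Gam v s t" and V: "v (t - s) = v t + v s - 2 * Gam v s t"
    using s by (simp_all add: Gam_def field_simps)
  have "(Sigma_mat v (t - s) t *v ?\<theta>') $ 1 = v t * \<theta>$1 + Gam v s t * \<theta>$2"
    by (simp add: Sigma_mat_def matrix_vector_mult_def sum_2 \<Gamma>' algebra_simps)
  moreover have "(Sigma_mat v (t - s) t *v ?\<theta>') $ 2
      = (v t * \<theta>$1 + Gam v s t * \<theta>$2) - (Gam v s t * \<theta>$1 + v s * \<theta>$2)"
    by (simp add: Sigma_mat_def matrix_vector_mult_def sum_2 \<Gamma>' V algebra_simps)
  ultimately have "Sigma_mat v (t - s) t *v ?\<theta>' = ?w"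
    by (simp add: vec_eq_iff forall_2 theta_star_equations)
  then have "?w \<bullet> (matrix_inv (Sigma_mat v (t - s) t) *v ?w) = ?w \<bullet> ?\<theta>'"
    by (rule matrix_inv_quadratic_form[OF Sigma_invertible(2)])
  then have "Lambda v s t (b + c2 * t) (b + c2 * t - c1 * s) = ?w \<bullet> ?\<theta>' / 2"
    by (simp add: Lambda_def)
  then show ?thesis
    by (simp add: inner_vec_def sum_2 algebra_simps)
qed

end

theorem lemma3p10:
  fixes v :: "real \<Rightarrow> real" and M :: "'a measure" and A :: "real \<Rightarrow> 'a \<Rightarrow> real"
    and \<alpha> b c1 c2 s t :: real
  assumes v_cont: "continuous_on {0..} v"
    and v_nonneg: "\<forall>x\<ge>0. v x \<ge> 0"
    and v0: "v 0 = 0"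
    and alpha: "\<alpha> < 2" "((\<lambda>x. v x / x powr \<alpha>) \<longlongrightarrow> 0) at_top"
    and M: "prob_space M"
    and A_gauss: "centered_gaussian_process M A"
    and A_paths: "\<forall>x\<in>space M. continuous_on UNIV (\<lambda>r. A r x)"
    and A0: "\<forall>x\<in>space M. A 0 x = 0"
    and A_var: "\<forall>r q. prob_space.variance M (\<lambda>x. A q x - A r x) = v \<bar>q - r\<bar>"
    and A_stat: "\<forall>h. \<forall>F::real set. finite F \<longrightarrow>
        distr M (Pi\<^sub>M F (\<lambda>_. borel)) (\<lambda>x. \<lambda>u\<in>F. A (u + h) x - A h x)
      = distr M (Pi\<^sub>M F (\<lambda>_. borel)) (\<lambda>x. \<lambda>u\<in>F. A u x - A 0 x)"
    and Sigma_nonsing: "\<forall>s' t'. 0 < s' \<and> s' < t' \<longrightarrow> invertible (Sigma_mat v s' t')"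
    and A_assm: "assumption_A v"
    and b: "b > 0" and c: "c1 > c2" "c2 > 0"
    and t: "t > b / (c1 - c2)"
    and s: "0 < s" "s < t"
    and k: "kfun v b c2 s t \<ge> c1 * s"
  shows "fstar v b c1 c2 s t \<in> U_set b c1 c2 s t \<inter> rkhs (Gam v)
    \<and> rate v (fstar v b c1 c2 s t) = (INF g\<in>U_set b c1 c2 s t. rate v g)
    \<and> (INF g\<in>U_set b c1 c2 s t. rate v g) = ereal (Lambda v s t (b + c2 * t) (b + c2 * t - c1 * s))"
proof -
  interpret U_set_minimization v b c1 c2 s t
  proof (rule U_set_minimization.intro)
    show "pos_semidef_kernel (Gam v)"
      by (rule Gam_pos_semidef_kernel[OF M A_gauss A0 A_var])
    show "U_set_minimization_axioms v b c1 c2 s t"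
      using A_assm v0 v_cont tendsto_div_square_of_div_powr[OF alpha] b c t s k
        Sigma_nonsing[rule_format, of s t] Sigma_nonsing[rule_format, of "t - s" t]
      by unfold_locales auto
  qed
  show ?thesis
    using fstar_in_U fstar_in_rkhs rate_fstar INF_rate_U_set Lambda_eq by simp
qed

end
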